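(* Let $a,b\in\mathbb{R}[\sin t,\cos t]$ be real trigonometric polynomials with $b$ having only simple zeroes, consider $x'=a(t)|x|+b(t)$, and let $u(t,x)$ denote its solution with $u(0,x)=x$. Let $-\infty=x_0<x_1<\dots<x_r<x_{r+1}=+\infty$ be real numbers such that for each $i\in\{0,\dots,r\}$ and each $x\in(x_i,x_{i+1})$ all zeroes of $t\in[0,2\pi]\mapsto u(t,x)$ are simple, and their number is constant for $x\in(x_i,x_{i+1})$. Let $u(t)$ be a $2\pi$-periodic solution with $u(0)\notin\{x_1,\dots,x_r\}$. Then $u$ has an even number of zeroes in a period, all simple. Moreover: \begin{enumerate} \item If $u(0)>x_r$, then $u(t)>0$ for every $t\in\mathbb{R}$, and if $u(0)<x_1$, then $u(t)<0$ for every $t\in\mathbb{R}$. \item Assume that $x_1,\dots,x_r$ are exactly the values at $t=0$ of the solutions having a non-simple zero. If $x_1<u(0)<x_r$, then $u$ has non-definite sign, i.e. it is strictly positive for some values of $t$ and strictly negative for some other values. \end{enumerate}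
   Context: A solution is periodic if $u(0)=u(2\pi)$. A zero $t_0$ of a solution is simple if the derivative of the solution at $t_0$ (equal to $b(t_0)$) is nonzero. *)

theory Defs
  imports "HOL-Analysis.Analysis"
begin

definition trig_poly :: "(real \<Rightarrow> real) \<Rightarrow> bool" where
  "trig_poly f \<longleftrightarrow> (\<exists>N (c :: nat \<Rightarrow> nat \<Rightarrow> real).
     \<forall>t. f t = (\<Sum>i\<le>N. \<Sum>j\<le>N. c i j * sin t ^ i * cos t ^ j))"

definition simple_zero :: "(real \<Rightarrow> real) \<Rightarrow> real \<Rightarrow> bool" where
  "simple_zero f t0 \<longleftrightarrow> f t0 = 0 \<and> deriv f t0 \<noteq> 0"

definition is_solution :: "(real \<Rightarrow> real) \<Rightarrow> (real \<Rightarrow> real) \<Rightarrow> (real \<Rightarrow> real) \<Rightarrow> bool" where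
  "is_solution a b v \<longleftrightarrow> (\<forall>t. (v has_real_derivative (a t * \<bar>v t\<bar> + b t)) (at t))"

text \<open>The i-th interval (x_i, x_{i+1}) for i = 0..r, with x_0 = -inf, x_{r+1} = +inf.\<close>
definition gap :: "(nat \<Rightarrow> real) \<Rightarrow> nat \<Rightarrow> nat \<Rightarrow> real set" where
  "gap xs r i = {x. (i = 0 \<or> xs i < x) \<and> (i = r \<or> x < xs (Suc i))}"

end

theory Submission
  imports Defs "HOL-Library.Periodic_Fun"
begin

text \<open>The right-hand side \<open>a(t)|x| + b(t)\<close> is Lipschitz in \<open>x\<close> with constant \<open>sup |a|\<close>, so
  solutions are unique and strictly ordered, and a solution with \<open>u(0) = u(2\<pi>)\<close> is
  \<open>2\<pi>\<close>-periodic. At a zero the derivative of a solution is \<open>b(t)\<close>, so simple zeros are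
  isolated sign changes; over a period the sign returns to its initial value, hence their
  number is even. A solution starting high enough stays positive on \<open>[0, 2\<pi>]\<close> (with
  \<open>A \<ge> |a|\<close> and \<open>B \<ge> |b|\<close>, the function \<open>(u + B/A) exp (A t)\<close> increases while \<open>u \<ge> 0\<close>),
  so the constant number of zeros on the top gap is \<open>0\<close>; as the solution through \<open>0\<close> has a
  zero, the top gap lies in \<open>x > 0\<close> and its solutions are positive, and symmetrically for the
  bottom gap. Finally, a solution starting strictly between \<open>x\<^sub>1\<close> and \<open>x\<^sub>r\<close> stays strictly
  between the solutions through them, which both vanish somewhere.\<close>

lemma trig_poly_bounded:
  assumes "trig_poly f"
  obtains M where "M > 0" "\<And>t. \<bar>f t\<bar> \<le> M"
proof -
  obtain N c where f: "\<And>t. f t = (\<Sum>i\<le>N. \<Sum>j\<le>N. c i j * sin t ^ i * cos t ^ j)"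
    using assms unfolding trig_poly_def by blast
  define S where "S = (\<Sum>i\<le>N. \<Sum>j\<le>N. \<bar>c i j\<bar>)"
  have term_le: "\<bar>c i j * sin t ^ i * cos t ^ j\<bar> \<le> \<bar>c i j\<bar>" for i j t
  proof -
    have "\<bar>sin t\<bar> ^ i * \<bar>cos t\<bar> ^ j \<le> 1" by (intro mult_le_one power_le_one) auto
    then have "\<bar>c i j\<bar> * (\<bar>sin t\<bar> ^ i * \<bar>cos t\<bar> ^ j) \<le> \<bar>c i j\<bar>" by (rule mult_left_le) simp
    then show ?thesis by (simp add: abs_mult power_abs mult.assoc)
  qed
  have bound: "\<bar>f t\<bar> \<le> S" for t
  proof -
    have "\<bar>f t\<bar> \<le> (\<Sum>i\<le>N. \<bar>\<Sum>j\<le>N. c i j * sin t ^ i * cos t ^ j\<bar>)"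
      unfolding f by (rule sum_abs)
    also have "\<dots> \<le> (\<Sum>i\<le>N. \<Sum>j\<le>N. \<bar>c i j * sin t ^ i * cos t ^ j\<bar>)"
      by (intro sum_mono sum_abs)
    also have "\<dots> \<le> S"
      unfolding S_def by (intro sum_mono term_le)
    finally show ?thesis .
  qed
  have "S \<ge> 0" unfolding S_def by (simp add: sum_nonneg)
  show ?thesis
  proof (rule that[of "S + 1"])
    show "0 < S + 1" using \<open>S \<ge> 0\<close> by simp
    show "\<bar>f t\<bar> \<le> S + 1" for t using bound[of t] by simp
  qed
qed

lemma trig_poly_periodic: "trig_poly f \<Longrightarrow> f (t + 2*pi) = f t"
  unfolding trig_poly_def by auto

lemma periodic_representative:
  fixes f :: "real \<Rightarrow> 'a"
  assumes "\<And>t. f (t + p) = f t" and "p > 0"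
  obtains s where "s \<in> {0..<p}" "f s = f t"
proof
  interpret periodic_fun_simple f p by standard (fact assms(1))
  define k where "k = \<lfloor>t / p\<rfloor>"
  show "f (t - of_int k * p) = f t" by (rule minus_of_int)
  have "of_int k \<le> t / p" "t / p < of_int k + 1" unfolding k_def by linarith+
  then show "t - of_int k * p \<in> {0..<p}" using assms(2) by (simp add: field_simps)
qed

lemma connected_no_zero_same_sign:
  fixes f :: "'a::topological_space \<Rightarrow> real"
  assumes "connected S" "continuous_on S f" "\<forall>x\<in>S. f x \<noteq> 0" "x \<in> S" "y \<in> S"
  shows "f x > 0 \<longleftrightarrow> f y > 0"
proof -
  have "connected (f ` S)" using assms(2,1) by (rule connected_continuous_image)
  then have "0 \<in> f ` S" if "p \<in> S" "q \<in> S" "f p \<le> 0" "0 \<le> f q" for p q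
    using that unfolding connected_iff_interval by (meson imageI)
  then have "\<not> (f p \<le> 0 \<and> 0 \<le> f q)" if "p \<in> S" "q \<in> S" for p q
    using assms(3) that by fastforce
  then show ?thesis using assms(4,5) by (meson less_imp_le not_le)
qed

lemma first_zero:
  fixes w :: "real \<Rightarrow> real"
  assumes cont: "continuous_on {a..b} w" and "a \<le> b" and "w a > 0" and "w b \<le> 0"
  obtains t0 where "t0 \<in> {a..b}" and "w t0 = 0" and "\<And>x. x \<in> {a..t0} \<Longrightarrow> w x \<ge> 0"
proof -
  define Z where "Z = {s \<in> {a..b}. w s = 0}"
  have "Z \<noteq> {}"
    using IVT2'[of w b 0 a, OF \<open>w b \<le> 0\<close> _ \<open>a \<le> b\<close> cont] \<open>w a > 0\<close> unfolding Z_def by force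
  moreover have "bdd_below Z" unfolding Z_def by (rule bdd_belowI[of _ a]) auto
  moreover have "closed Z" unfolding Z_def by (rule continuous_closed_preimage_constant[OF cont]) simp
  ultimately have "Inf Z \<in> Z" by (rule closed_contains_Inf)
  then have t0: "Inf Z \<in> {a..b}" "w (Inf Z) = 0" unfolding Z_def by auto
  have "w x \<ge> 0" if x: "x \<in> {a..Inf Z}" for x
  proof (cases "x = Inf Z")
    case False
    have "w s \<noteq> 0" if "s \<in> {a..x}" for s
      using cInf_lower[OF _ \<open>bdd_below Z\<close>, of s] that x False t0(1) unfolding Z_def by force
    then have "w a > 0 \<longleftrightarrow> w x > 0"
      using x t0(1) by (intro connected_no_zero_same_sign[of "{a..x}"] continuous_on_subset[OF cont]) auto
    then show ?thesis using \<open>w a > 0\<close> by simp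
  qed (use t0 in simp)
  with t0 show ?thesis using that by blast
qed

lemma zero_if_abs_deriv_le_forward:
  fixes d :: "real \<Rightarrow> real"
  assumes deriv: "\<And>x. (d has_real_derivative D x) (at x)"
    and le: "\<And>x. \<bar>D x\<bar> \<le> A * \<bar>d x\<bar>" and "d s = 0" and "s \<le> t"
  shows "d t = 0"
proof -
  define g where "g x = d x ^ 2 * exp (- 2 * A * x)" for x
  have "g t \<le> g s"
  proof (rule DERIV_nonpos_imp_nonincreasing[OF \<open>s \<le> t\<close>])
    fix x
    have "(g has_real_derivative 2 * (d x * D x - A * d x ^ 2) * exp (- 2 * A * x)) (at x)"
      unfolding g_def using deriv[of x]
      by (auto intro!: derivative_eq_intros simp: algebra_simps power2_eq_square)
    moreover have "d x * D x \<le> A * d x ^ 2"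
    proof -
      have "d x * D x \<le> \<bar>d x\<bar> * \<bar>D x\<bar>" by (metis abs_ge_self abs_mult)
      also have "\<dots> \<le> \<bar>d x\<bar> * (A * \<bar>d x\<bar>)" by (rule mult_left_mono[OF le abs_ge_zero])
      also have "\<dots> = A * d x ^ 2" by (metis abs_mult_self_eq mult.left_commute power2_eq_square)
      finally show ?thesis .
    qed
    ultimately show "\<exists>y. (g has_real_derivative y) (at x) \<and> y \<le> 0"
      by (intro exI conjI) (auto simp: mult_nonpos_nonneg)
  qed
  then show ?thesis unfolding g_def using \<open>d s = 0\<close> by (simp add: mult_le_0_iff)
qed

lemma zero_if_abs_deriv_le:
  fixes d :: "real \<Rightarrow> real"
  assumes deriv: "\<And>x. (d has_real_derivative D x) (at x)"
    and le: "\<And>x. \<bar>D x\<bar> \<le> A * \<bar>d x\<bar>" and "d s = 0"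
  shows "d t = 0"
proof (cases "s \<le> t")
  case True
  then show ?thesis using zero_if_abs_deriv_le_forward[OF deriv le \<open>d s = 0\<close>] by blast
next
  case False
  have "((\<lambda>x. d (- x)) has_real_derivative - D (- x)) (at x)" for x
    using deriv[of "- x"] by (simp add: DERIV_mirror)
  from zero_if_abs_deriv_le_forward[OF this, of A "- s" "- t"] le \<open>d s = 0\<close> False
  show ?thesis by simp
qed

lemma is_solution_DERIV:
  "is_solution a b w \<Longrightarrow> (w has_real_derivative a t * \<bar>w t\<bar> + b t) (at t)"
  unfolding is_solution_def by blast

lemma is_solution_continuous_on: "is_solution a b w \<Longrightarrow> continuous_on S w"
  by (meson DERIV_isCont continuous_at_imp_continuous_on is_solution_DERIV)

lemma is_solution_simple_zero_iff:
  assumes "is_solution a b w"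
  shows "simple_zero w t \<longleftrightarrow> w t = 0 \<and> b t \<noteq> 0"
  using DERIV_imp_deriv[OF is_solution_DERIV[OF assms]] unfolding simple_zero_def by auto

lemma is_solution_uminus:
  "is_solution a b w \<Longrightarrow> is_solution (\<lambda>t. - a t) (\<lambda>t. - b t) (\<lambda>t. - w t)"
  unfolding is_solution_def by (auto intro: derivative_eq_intros)

lemma is_solution_shift:
  assumes "is_solution a b w" and "\<And>t. a (t + p) = a t" and "\<And>t. b (t + p) = b t"
  shows "is_solution a b (\<lambda>t. w (t + p))"
  unfolding is_solution_def
proof
  fix t
  have "(w has_real_derivative a (t + p) * \<bar>w (t + p)\<bar> + b (t + p)) (at (t + p))"
    by (rule is_solution_DERIV[OF assms(1)])
  then show "((\<lambda>t. w (t + p)) has_real_derivative a t * \<bar>w (t + p)\<bar> + b t) (at t)"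
    by (simp add: assms(2,3) DERIV_shift)
qed

lemma is_solution_unique:
  assumes w1: "is_solution a b w1" and w2: "is_solution a b w2"
    and A: "\<And>t. \<bar>a t\<bar> \<le> A" and "w1 s = w2 s"
  shows "w1 t = w2 t"
proof -
  have "0 \<le> A" using A[of 0] by (meson abs_ge_zero order_trans)
  define d where "d t = w1 t - w2 t" for t
  define D where "D x = a x * (\<bar>w1 x\<bar> - \<bar>w2 x\<bar>)" for x
  have "(d has_real_derivative D x) (at x)" for x
    using DERIV_diff[OF is_solution_DERIV[OF w1] is_solution_DERIV[OF w2]]
    unfolding d_def[abs_def] D_def by (simp add: algebra_simps)
  moreover have "\<bar>D x\<bar> \<le> A * \<bar>d x\<bar>" for x
    unfolding D_def d_def abs_mult using A \<open>0 \<le> A\<close> by (intro mult_mono) (auto simp: abs_triangle_ineq3)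
  moreover have "d s = 0" unfolding d_def using \<open>w1 s = w2 s\<close> by simp
  ultimately have "d t = 0" by (rule zero_if_abs_deriv_le)
  then show ?thesis unfolding d_def by simp
qed

lemma is_solution_less:
  assumes w1: "is_solution a b w1" and w2: "is_solution a b w2"
    and A: "\<And>t. \<bar>a t\<bar> \<le> A" and "w1 s < w2 s"
  shows "w1 t < w2 t"
proof -
  have "w2 x \<noteq> w1 x" for x
    using is_solution_unique[OF w1 w2 A, of x s] \<open>w1 s < w2 s\<close> by auto
  then have "\<forall>x\<in>UNIV. w2 x - w1 x \<noteq> 0" by simp
  moreover have "continuous_on UNIV (\<lambda>x. w2 x - w1 x)"
    using is_solution_continuous_on[OF w1] is_solution_continuous_on[OF w2]
    by (intro continuous_intros)
  ultimately show ?thesis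
    using connected_no_zero_same_sign[of UNIV "\<lambda>x. w2 x - w1 x" s t] \<open>w1 s < w2 s\<close> by simp
qed

lemma is_solution_periodic:
  assumes "is_solution a b w" and "\<And>t. \<bar>a t\<bar> \<le> A"
    and "\<And>t. a (t + p) = a t" and "\<And>t. b (t + p) = b t" and "w p = w 0"
  shows "w (t + p) = w t"
proof -
  have "is_solution a b (\<lambda>t. w (t + p))" by (rule is_solution_shift) (fact assms)+
  from is_solution_unique[OF this assms(1,2), of 0 t] show ?thesis using assms(5) by simp
qed

lemma is_solution_pos_if_start_large:
  assumes w: "is_solution a b w" and A: "\<And>t. \<bar>a t\<bar> \<le> A" and B: "\<And>t. \<bar>b t\<bar> \<le> B"
    and "A > 0" and large: "w 0 > B / A * exp (A * T)" and t: "t \<in> {0..T}"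
  shows "w t > 0"
proof (rule ccontr)
  assume "\<not> w t > 0"
  define C where "C = B / A"
  have "C \<ge> 0" unfolding C_def using B[of 0] \<open>A > 0\<close> by (meson abs_ge_zero divide_nonneg_pos order_trans)
  then have "w 0 > 0" using large unfolding C_def[symmetric] by (smt (verit) exp_gt_zero mult_nonneg_nonneg)
  moreover have "0 \<le> t" "w t \<le> 0" using t \<open>\<not> w t > 0\<close> by auto
  ultimately obtain t0 where t0: "t0 \<in> {0..t}" "w t0 = 0"
    and nonneg: "\<And>x. x \<in> {0..t0} \<Longrightarrow> w x \<ge> 0"
    using first_zero[OF is_solution_continuous_on[OF w], of 0 t] by blast
  define g where "g s = (w s + C) * exp (A * s)" for s
  have "0 \<le> t0" using t0 by simp
  have "g 0 \<le> g t0"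
  proof (rule DERIV_nonneg_imp_nondecreasing[OF \<open>0 \<le> t0\<close>])
    fix x assume x: "0 \<le> x" "x \<le> t0"
    have "(g has_real_derivative (a x * w x + b x + A * w x + B) * exp (A * x)) (at x)"
      unfolding g_def using is_solution_DERIV[OF w, of x] nonneg[of x] x \<open>A > 0\<close>
      by (auto intro!: derivative_eq_intros simp: C_def algebra_simps)
    moreover have "a x * w x + b x + A * w x + B \<ge> 0"
    proof -
      have "- a x * w x \<le> A * w x"
        using A[of x] nonneg[of x] x by (intro mult_right_mono) (auto simp: abs_le_iff)
      moreover have "- b x \<le> B" using B[of x] by (simp add: abs_le_iff)
      ultimately show ?thesis by simp
    qed
    ultimately show "\<exists>y. (g has_real_derivative y) (at x) \<and> y \<ge> 0" by auto
  qed
  then have "w 0 + C \<le> C * exp (A * t0)" unfolding g_def using t0(2) by simp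
  also have "\<dots> \<le> C * exp (A * T)"
    using \<open>C \<ge> 0\<close> \<open>A > 0\<close> t0 t by (intro mult_left_mono) auto
  finally show False using large \<open>C \<ge> 0\<close> unfolding C_def by simp
qed

lemma sign_change_at_simple_zero:
  fixes f :: "real \<Rightarrow> real"
  assumes "(f has_real_derivative D) (at z)" and "f z = 0" and "D \<noteq> 0"
  obtains \<epsilon> where "\<epsilon> > 0"
    and "\<And>y. z - \<epsilon> < y \<Longrightarrow> y < z \<Longrightarrow> f y * D < 0"
    and "\<And>y. z < y \<Longrightarrow> y < z + \<epsilon> \<Longrightarrow> f y * D > 0"
proof -
  have "((\<lambda>y. (f y - f z) / (y - z)) \<longlongrightarrow> D) (at z)"
    using assms(1) has_field_derivative_iff by blast
  then have "((\<lambda>y. (f y - f z) / (y - z) * D) \<longlongrightarrow> D * D) (at z)"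
    by (rule tendsto_mult_right)
  moreover have "D * D > 0" using assms(3) not_real_square_gt_zero by blast
  ultimately have "eventually (\<lambda>y. (f y - f z) / (y - z) * D > 0) (at z)" by (rule order_tendstoD)
  then obtain \<epsilon> where "\<epsilon> > 0"
    and \<epsilon>: "\<And>y. y \<noteq> z \<Longrightarrow> dist y z < \<epsilon> \<Longrightarrow> f y * D / (y - z) > 0"
    unfolding eventually_at using assms(2) by (auto simp: field_simps)
  show ?thesis
  proof (rule that[OF \<open>\<epsilon> > 0\<close>])
    show "f y * D < 0" if "z - \<epsilon> < y" "y < z" for y
      using \<epsilon>[of y] that by (auto simp: dist_real_def zero_less_divide_iff)
    show "f y * D > 0" if "z < y" "y < z + \<epsilon>" for y
      using \<epsilon>[of y] that by (auto simp: dist_real_def zero_less_divide_iff)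
  qed
qed

lemma finite_simple_zeros:
  fixes f :: "real \<Rightarrow> real"
  assumes deriv: "\<And>t. (f has_real_derivative f' t) (at t)"
    and simple: "\<And>t. t \<in> {p..q} \<Longrightarrow> f t = 0 \<Longrightarrow> f' t \<noteq> 0"
  shows "finite {t \<in> {p..q}. f t = 0}"
proof -
  have "finite ({p..q} \<inter> {t. f t = 0})"
  proof (rule finite_not_islimpt_in_compact)
    fix z assume z: "z \<in> {p..q}"
    have "eventually (\<lambda>y. f y \<noteq> 0) (at z)"
    proof (cases "f z = 0")
      case True
      obtain \<epsilon> where "\<epsilon> > 0" and \<epsilon>: "\<And>y. z - \<epsilon> < y \<Longrightarrow> y < z \<Longrightarrow> f y * f' z < 0"
        "\<And>y. z < y \<Longrightarrow> y < z + \<epsilon> \<Longrightarrow> f y * f' z > 0"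
        using sign_change_at_simple_zero[OF deriv True simple[OF z True]] by blast
      have "f y \<noteq> 0" if "y \<noteq> z" "dist y z < \<epsilon>" for y
        using that \<epsilon>[of y] by (cases "y < z") (auto simp: dist_real_def)
      then show ?thesis unfolding eventually_at using \<open>\<epsilon> > 0\<close> by blast
    next
      case False
      have "(f \<longlongrightarrow> f z) (at z)" using DERIV_isCont[OF deriv] by (simp add: isCont_def)
      then show ?thesis using False by (rule tendsto_imp_eventually_ne)
    qed
    then show "\<not> z islimpt {t. f t = 0}" unfolding islimpt_iff_eventually by simp
  qed simp
  moreover have "{t \<in> {p..q}. f t = 0} = {p..q} \<inter> {t. f t = 0}" by auto
  ultimately show ?thesis by simp
qed

lemma cross_first_simple_zero:
  fixes f :: "real \<Rightarrow> real"
  assumes deriv: "\<And>t. (f has_real_derivative f' t) (at t)"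
    and fin: "finite {t. s < t \<and> t < q \<and> f t = 0}"
    and z: "s < z" "z < q" "f z = 0" "f' z \<noteq> 0"
    and first: "\<And>t. s < t \<Longrightarrow> t < z \<Longrightarrow> f t \<noteq> 0" and "f s \<noteq> 0"
  obtains s' where "z < s'" and "s' < q" and "f s' \<noteq> 0" and "f s' > 0 \<longleftrightarrow> \<not> f s > 0"
    and "{t. s' < t \<and> t < q \<and> f t = 0} = {t. s < t \<and> t < q \<and> f t = 0} - {z}"
proof -
  define Z where "Z = {t. s < t \<and> t < q \<and> f t = 0}"
  define m where "m = Min (insert q (Z - {z}))"
  have fin_m: "finite (insert q (Z - {z}))" using fin unfolding Z_def by simp
  then have m: "m \<in> insert q (Z - {z})" unfolding m_def by (rule Min_in) simp
  have m_le: "m \<le> t" if "t \<in> insert q (Z - {z})" for t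
    unfolding m_def using fin_m that by (rule Min_le)
  have "z < m"
  proof (rule ccontr)
    assume "\<not> z < m"
    with m z have "s < m" "m < z" "f m = 0" unfolding Z_def by auto
    with first show False by blast
  qed
  obtain \<epsilon> where "\<epsilon> > 0" and \<epsilon>: "\<And>y. z - \<epsilon> < y \<Longrightarrow> y < z \<Longrightarrow> f y * f' z < 0"
    "\<And>y. z < y \<Longrightarrow> y < z + \<epsilon> \<Longrightarrow> f y * f' z > 0"
    using sign_change_at_simple_zero[OF deriv z(3,4)] by blast
  define \<delta> where "\<delta> = min \<epsilon> (min (z - s) (m - z)) / 2"
  have \<delta>: "0 < \<delta>" "\<delta> < \<epsilon>" "s < z - \<delta>" "z + \<delta> < m"
    unfolding \<delta>_def using \<open>\<epsilon> > 0\<close> z \<open>z < m\<close> by (auto simp: min_def field_simps)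
  have "f (z - \<delta>) * f' z < 0" using \<epsilon>(1)[of "z - \<delta>"] \<delta> by simp
  then have left: "f (z - \<delta>) > 0 \<longleftrightarrow> f' z < 0" by (auto simp: mult_less_0_iff)
  have "f (z + \<delta>) * f' z > 0" using \<epsilon>(2)[of "z + \<delta>"] \<delta> by simp
  then have right: "f (z + \<delta>) > 0 \<longleftrightarrow> f' z > 0" and "f (z + \<delta>) \<noteq> 0"
    by (auto simp: zero_less_mult_iff)
  have "f t \<noteq> 0" if "t \<in> {s..z - \<delta>}" for t
    using first[of t] \<open>f s \<noteq> 0\<close> that \<delta> by (cases "t = s") auto
  then have "f s > 0 \<longleftrightarrow> f (z - \<delta>) > 0"
    using \<delta> deriv by (intro connected_no_zero_same_sign[of "{s..z - \<delta>}"])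
      (auto intro: DERIV_isCont continuous_at_imp_continuous_on)
  then have "f (z + \<delta>) > 0 \<longleftrightarrow> \<not> f s > 0" using left right z(4) by auto
  moreover have "{t. z + \<delta> < t \<and> t < q \<and> f t = 0} = Z - {z}"
  proof (intro equalityI subsetI)
    fix t assume "t \<in> {t. z + \<delta> < t \<and> t < q \<and> f t = 0}"
    then show "t \<in> Z - {z}" using z \<delta> unfolding Z_def by auto
  next
    fix t assume "t \<in> Z - {z}"
    then show "t \<in> {t. z + \<delta> < t \<and> t < q \<and> f t = 0}" using m_le[of t] \<delta> unfolding Z_def by auto
  qed
  moreover have "z + \<delta> < q" using m_le[of q] \<delta> by simp
  ultimately show ?thesis
    using that[of "z + \<delta>"] \<delta> \<open>f (z + \<delta>) \<noteq> 0\<close> unfolding Z_def by simp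
qed

lemma even_card_simple_zeros_iff:
  fixes f :: "real \<Rightarrow> real"
  assumes deriv: "\<And>t. (f has_real_derivative f' t) (at t)"
    and fin: "finite {t. p < t \<and> t < q \<and> f t = 0}"
    and simple: "\<And>t. p < t \<Longrightarrow> t < q \<Longrightarrow> f t = 0 \<Longrightarrow> f' t \<noteq> 0"
    and "p < q" and "f p \<noteq> 0" and "f q \<noteq> 0"
  shows "even (card {t. p < t \<and> t < q \<and> f t = 0}) \<longleftrightarrow> (f p > 0 \<longleftrightarrow> f q > 0)"
proof -
  define Z where "Z s = {t. s < t \<and> t < q \<and> f t = 0}" for s
  have "even (card (Z s)) \<longleftrightarrow> (f s > 0 \<longleftrightarrow> f q > 0)"
    if "card (Z s) = n" "finite (Z s)" "p \<le> s" "s < q" "f s \<noteq> 0" for n s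
    using that
  proof (induction n arbitrary: s)
    case 0
    then have "f t \<noteq> 0" if "t \<in> {s..q}" for t
      using that \<open>f q \<noteq> 0\<close> unfolding Z_def by (cases "t = s \<or> t = q") auto
    then have "f s > 0 \<longleftrightarrow> f q > 0"
      using \<open>s < q\<close> deriv by (intro connected_no_zero_same_sign[of "{s..q}"])
        (auto intro: DERIV_isCont continuous_at_imp_continuous_on)
    then show ?case using 0 by simp
  next
    case (Suc n s)
    define z where "z = Min (Z s)"
    have "Z s \<noteq> {}" using Suc.prems(1) by auto
    then have "z \<in> Z s" and z_min: "\<And>t. t \<in> Z s \<Longrightarrow> z \<le> t"
      using Suc.prems(2) unfolding z_def by auto
    then have z: "s < z" "z < q" "f z = 0" and "f' z \<noteq> 0"
      using simple Suc.prems(3) unfolding Z_def by auto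
    have "f t \<noteq> 0" if "s < t" "t < z" for t
      using z_min[of t] that z unfolding Z_def by force
    with cross_first_simple_zero[OF deriv Suc.prems(2)[unfolded Z_def] z \<open>f' z \<noteq> 0\<close> _ Suc.prems(5)]
    obtain s' where "z < s'" "s' < q" "f s' \<noteq> 0" and sign: "f s' > 0 \<longleftrightarrow> \<not> f s > 0"
      and "Z s' = Z s - {z}" unfolding Z_def by blast
    then have "even n \<longleftrightarrow> (f s' > 0 \<longleftrightarrow> f q > 0)"
      using Suc.IH[of s'] Suc.prems(1-3) \<open>z \<in> Z s\<close> z by simp
    then show ?case using Suc.prems(1) sign by auto
  qed
  then show ?thesis using fin assms(4-6) unfolding Z_def by blast
qed

lemma odd_card_simple_zeros_between_zeros:
  fixes f :: "real \<Rightarrow> real"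
  assumes deriv: "\<And>t. (f has_real_derivative f' t) (at t)"
    and fin: "finite {t. p < t \<and> t < q \<and> f t = 0}"
    and simple: "\<And>t. p < t \<Longrightarrow> t < q \<Longrightarrow> f t = 0 \<Longrightarrow> f' t \<noteq> 0"
    and "p < q" and "f p = 0" and "f q = 0" and "f' q = f' p" and "f' p \<noteq> 0"
  shows "odd (card {t. p < t \<and> t < q \<and> f t = 0})"
proof -
  obtain \<epsilon>p where "\<epsilon>p > 0" and "\<And>y. p - \<epsilon>p < y \<Longrightarrow> y < p \<Longrightarrow> f y * f' p < 0"
    and \<epsilon>p: "\<And>y. p < y \<Longrightarrow> y < p + \<epsilon>p \<Longrightarrow> f y * f' p > 0"
    using sign_change_at_simple_zero[OF deriv \<open>f p = 0\<close> \<open>f' p \<noteq> 0\<close>] by blast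
  obtain \<epsilon>q where "\<epsilon>q > 0" and \<epsilon>q: "\<And>y. q - \<epsilon>q < y \<Longrightarrow> y < q \<Longrightarrow> f y * f' p < 0"
    and "\<And>y. q < y \<Longrightarrow> y < q + \<epsilon>q \<Longrightarrow> f y * f' p > 0"
    using sign_change_at_simple_zero[OF deriv[of q, unfolded \<open>f' q = f' p\<close>] \<open>f q = 0\<close> \<open>f' p \<noteq> 0\<close>]
    by blast
  define \<delta> where "\<delta> = min (min \<epsilon>p \<epsilon>q) (q - p) / 3"
  have \<delta>: "0 < \<delta>" "\<delta> < \<epsilon>p" "\<delta> < \<epsilon>q" "p + \<delta> < q - \<delta>"
    unfolding \<delta>_def using \<open>\<epsilon>p > 0\<close> \<open>\<epsilon>q > 0\<close> \<open>p < q\<close> by (auto simp: min_def field_simps)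
  have left: "f (p + \<delta>) * f' p > 0" and right: "f (q - \<delta>) * f' p < 0"
    using \<epsilon>p[of "p + \<delta>"] \<epsilon>q[of "q - \<delta>"] \<delta> by auto
  have "f t \<noteq> 0" if "p < t" "t \<le> p + \<delta>" for t
    using \<epsilon>p[of t] that \<delta> by auto
  moreover have "f t \<noteq> 0" if "q - \<delta> \<le> t" "t < q" for t
    using \<epsilon>q[of t] that \<delta> by auto
  ultimately have zeros: "{t. p < t \<and> t < q \<and> f t = 0} = {t. p + \<delta> < t \<and> t < q - \<delta> \<and> f t = 0}"
    using \<delta> by (auto simp: not_le[symmetric])
  have "finite {t. p + \<delta> < t \<and> t < q - \<delta> \<and> f t = 0}" using fin unfolding zeros .
  moreover have "f' t \<noteq> 0" if "p + \<delta> < t" "t < q - \<delta>" "f t = 0" for t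
    using simple[of t] that \<delta> by simp
  moreover have "f (p + \<delta>) \<noteq> 0" "f (q - \<delta>) \<noteq> 0" using left right by auto
  ultimately have "even (card {t. p + \<delta> < t \<and> t < q - \<delta> \<and> f t = 0})
      \<longleftrightarrow> (f (p + \<delta>) > 0 \<longleftrightarrow> f (q - \<delta>) > 0)"
    using even_card_simple_zeros_iff[OF deriv _ _ \<open>p + \<delta> < q - \<delta>\<close>] by blast
  moreover have "f (p + \<delta>) > 0 \<longleftrightarrow> \<not> f (q - \<delta>) > 0"
    using left right by (auto simp: zero_less_mult_iff mult_less_0_iff)
  ultimately show ?thesis unfolding zeros by simp
qed

lemma even_card_periodic_simple_zeros:
  fixes f :: "real \<Rightarrow> real"
  assumes deriv: "\<And>t. (f has_real_derivative f' t) (at t)"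
    and periodic: "\<And>t. f (t + p) = f t" and "p > 0"
    and simple: "\<And>t. t \<in> {0..p} \<Longrightarrow> f t = 0 \<Longrightarrow> f' t \<noteq> 0"
  shows "even (card {t \<in> {0..<p}. f t = 0})"
proof -
  have "finite {t \<in> {0..p}. f t = 0}" by (rule finite_simple_zeros[OF deriv simple])
  then have fin: "finite {t. 0 < t \<and> t < p \<and> f t = 0}" by (rule finite_subset[rotated]) auto
  have simple': "\<And>t. 0 < t \<Longrightarrow> t < p \<Longrightarrow> f t = 0 \<Longrightarrow> f' t \<noteq> 0" using simple by simp
  have "f p = f 0" using periodic[of 0] by simp
  show ?thesis
  proof (cases "f 0 = 0")
    case False
    then have zeros: "{t \<in> {0..<p}. f t = 0} = {t. 0 < t \<and> t < p \<and> f t = 0}"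
      by (auto simp: less_eq_real_def)
    have "f p \<noteq> 0" using False \<open>f p = f 0\<close> by simp
    then have "even (card {t. 0 < t \<and> t < p \<and> f t = 0}) \<longleftrightarrow> (f 0 > 0 \<longleftrightarrow> f p > 0)"
      using even_card_simple_zeros_iff[OF deriv fin _ \<open>p > 0\<close> False] simple' by blast
    with zeros show ?thesis using \<open>f p = f 0\<close> by simp
  next
    case True
    have "(f has_real_derivative f' p) (at 0)"
      using deriv[of "0 + p"] unfolding DERIV_shift periodic by simp
    then have "f' p = f' 0" by (rule DERIV_unique[OF _ deriv])
    moreover have "f p = 0" using True \<open>f p = f 0\<close> by simp
    moreover have "f' 0 \<noteq> 0" using simple[of 0] True \<open>p > 0\<close> by simp
    ultimately have "odd (card {t. 0 < t \<and> t < p \<and> f t = 0})"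
      using odd_card_simple_zeros_between_zeros[OF deriv fin _ \<open>p > 0\<close> True] simple' by blast
    moreover have "{t \<in> {0..<p}. f t = 0} = insert 0 {t. 0 < t \<and> t < p \<and> f t = 0}"
      using True \<open>p > 0\<close> by (auto simp: less_eq_real_def)
    ultimately show ?thesis using fin by simp
  qed
qed

lemma periodic_solution_zeros:
  assumes v: "is_solution a b v" and "p > 0"
    and v_per: "\<And>t. v (t + p) = v t" and b_per: "\<And>t. b (t + p) = b t"
    and simple: "\<And>t. t \<in> {0..p} \<Longrightarrow> v t = 0 \<Longrightarrow> simple_zero v t"
  shows "finite {t \<in> {0..<p}. v t = 0}" and "even (card {t \<in> {0..<p}. v t = 0})"
    and "\<And>t. v t = 0 \<Longrightarrow> simple_zero v t"
proof -
  have b_nz: "a t * \<bar>v t\<bar> + b t \<noteq> 0" if "t \<in> {0..p}" "v t = 0" for t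
    using simple[OF that] is_solution_simple_zero_iff[OF v] that(2) by simp
  have "finite {t \<in> {0..p}. v t = 0}"
    by (rule finite_simple_zeros[OF is_solution_DERIV[OF v] b_nz])
  then show "finite {t \<in> {0..<p}. v t = 0}" by (rule finite_subset[rotated]) auto
  show "even (card {t \<in> {0..<p}. v t = 0})"
    by (rule even_card_periodic_simple_zeros[OF is_solution_DERIV[OF v] v_per \<open>p > 0\<close> b_nz])
  fix t assume "v t = 0"
  obtain s where "s \<in> {0..<p}" "(v s, b s) = (v t, b t)"
    using periodic_representative[of "\<lambda>t. (v t, b t)" p t] v_per b_per \<open>p > 0\<close> by auto
  then show "simple_zero v t"
    using b_nz[of s] \<open>v t = 0\<close> is_solution_simple_zero_iff[OF v] by auto
qed

lemma in_some_gap: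
  assumes "1 \<le> r" and x: "x \<notin> xs ` {1..r}"
  obtains i where "i \<le> r" and "x \<in> gap xs r i"
proof (cases "x < xs 1")
  case True
  then show ?thesis using that[of 0] unfolding gap_def by simp
next
  case False
  define I where "I = {i \<in> {1..r}. xs i < x}"
  have "x \<noteq> xs 1" using x assms(1) by auto
  with False have "1 \<in> I" using assms(1) unfolding I_def by simp
  have "finite I" unfolding I_def by simp
  define i where "i = Max I"
  have "i \<in> I" and i_max: "\<And>j. j \<in> I \<Longrightarrow> j \<le> i"
    unfolding i_def using Max_in[OF \<open>finite I\<close>] Max_ge[OF \<open>finite I\<close>] \<open>1 \<in> I\<close> by auto
  show ?thesis
  proof (cases "i = r")
    case True
    then show ?thesis using that[of r] \<open>i \<in> I\<close> unfolding I_def gap_def by auto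
  next
    case False
    then have "Suc i \<in> {1..r}" using \<open>i \<in> I\<close> unfolding I_def by auto
    moreover have "Suc i \<notin> I" using i_max[of "Suc i"] by auto
    ultimately have "\<not> xs (Suc i) < x" and "xs (Suc i) \<noteq> x"
      using x unfolding I_def by auto
    then have "x < xs (Suc i)" by simp
    then show ?thesis using that[of i] \<open>i \<in> I\<close> unfolding I_def gap_def by auto
  qed
qed

text \<open>The common number of zeros is that of a solution starting so high that it stays positive,
  i.e. zero; the solution starting at \<open>0\<close>, which vanishes at \<open>t = 0\<close>, then forces \<open>c \<ge> 0\<close>.\<close>
lemma is_solution_pos_above:
  assumes sol: "\<And>x. is_solution a b (\<lambda>t. u t x)" and init: "\<And>x. u 0 x = x"
    and A: "\<And>t. \<bar>a t\<bar> \<le> A" and B: "\<And>t. \<bar>b t\<bar> \<le> B" and "A > 0"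
    and fin: "\<And>x. c < x \<Longrightarrow> finite {t \<in> {0..T}. u t x = 0}"
    and count: "\<And>x. c < x \<Longrightarrow> card {t \<in> {0..T}. u t x = 0} = N"
    and "c < x" and t: "t \<in> {0..T}"
  shows "u t x > 0"
proof -
  define X where "X = max (c + 1) (B / A * exp (A * T) + 1)"
  have "c < X" unfolding X_def by simp
  have "u s X > 0" if "s \<in> {0..T}" for s
    using is_solution_pos_if_start_large[OF sol A B \<open>A > 0\<close> _ that] init unfolding X_def by simp
  then have "{s \<in> {0..T}. u s X = 0} = {}" by force
  then have "N = 0" using count[OF \<open>c < X\<close>] by (metis card.empty)
  then have no_zero: "{s \<in> {0..T}. u s y = 0} = {}" if "c < y" for y
    using count[OF that] fin[OF that] by simp
  have "c \<ge> 0" using no_zero[of 0] init[of 0] t by fastforce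
  then have "u 0 x > 0" using \<open>c < x\<close> init by simp
  moreover have "\<forall>s\<in>{0..T}. u s x \<noteq> 0" using no_zero[OF \<open>c < x\<close>] by auto
  ultimately show ?thesis
    using connected_no_zero_same_sign[of "{0..T}" "\<lambda>s. u s x" 0 t] is_solution_continuous_on[OF sol] t
    by simp
qed

lemma periodic_solution_pos_above:
  assumes sol: "\<And>x. is_solution a b (\<lambda>t. u t x)" and init: "\<And>x. u 0 x = x"
    and A: "\<And>t. \<bar>a t\<bar> \<le> A" and B: "\<And>t. \<bar>b t\<bar> \<le> B" and "A > 0"
    and fin: "\<And>x. c < x \<Longrightarrow> finite {t \<in> {0..p}. u t x = 0}"
    and count: "\<And>x. c < x \<Longrightarrow> card {t \<in> {0..p}. u t x = 0} = N"
    and v: "is_solution a b v" and v_per: "\<And>t. v (t + p) = v t" and "p > 0" and "c < v 0"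
  shows "v t > 0"
proof -
  obtain s where s: "s \<in> {0..<p}" "v s = v t"
    using periodic_representative[of v p t, OF v_per \<open>p > 0\<close>] by blast
  have "v s = u s (v 0)"
    by (rule is_solution_unique[OF v sol[of "v 0"] A, where s = 0]) (simp add: init)
  moreover have "u s (v 0) > 0"
    by (rule is_solution_pos_above[OF sol init A B \<open>A > 0\<close> fin count \<open>c < v 0\<close>]) (use s in auto)
  ultimately show ?thesis using s by simp
qed

lemma periodic_solution_neg_below:
  assumes sol: "\<And>x. is_solution a b (\<lambda>t. u t x)" and init: "\<And>x. u 0 x = x"
    and A: "\<And>t. \<bar>a t\<bar> \<le> A" and B: "\<And>t. \<bar>b t\<bar> \<le> B" and "A > 0"
    and fin: "\<And>x. x < c \<Longrightarrow> finite {t \<in> {0..p}. u t x = 0}"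
    and count: "\<And>x. x < c \<Longrightarrow> card {t \<in> {0..p}. u t x = 0} = N"
    and v: "is_solution a b v" and v_per: "\<And>t. v (t + p) = v t" and "p > 0" and "v 0 < c"
  shows "v t < 0"
proof -
  have "- v t > 0"
  proof (rule periodic_solution_pos_above[where u = "\<lambda>t x. - u t (- x)" and v = "\<lambda>t. - v t"
        and c = "- c" and p = p])
    show "is_solution (\<lambda>t. - a t) (\<lambda>t. - b t) (\<lambda>t. - u t (- x))" for x
      by (rule is_solution_uminus[OF sol])
    show "is_solution (\<lambda>t. - a t) (\<lambda>t. - b t) (\<lambda>t. - v t)"
      by (rule is_solution_uminus[OF v])
  qed (use init A B \<open>A > 0\<close> v_per \<open>p > 0\<close> \<open>v 0 < c\<close> fin count in auto)
  then show ?thesis by simp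
qed

lemma is_solution_changes_sign:
  assumes sol: "\<And>x. is_solution a b (\<lambda>t. u t x)" and init: "\<And>x. u 0 x = x"
    and A: "\<And>t. \<bar>a t\<bar> \<le> A" and v: "is_solution a b v"
    and "u t1 x1 = 0" and "u t2 x2 = 0" and "x1 < v 0" and "v 0 < x2"
  shows "(\<exists>t. v t > 0) \<and> (\<exists>t. v t < 0)"
proof -
  have "u t1 x1 < v t1"
    by (rule is_solution_less[OF sol v A, where s = 0]) (use init \<open>x1 < v 0\<close> in simp)
  moreover have "v t2 < u t2 x2"
    by (rule is_solution_less[OF v sol A, where s = 0]) (use init \<open>v 0 < x2\<close> in simp)
  ultimately show ?thesis using assms(5,6) by auto
qed

theorem corollary3p2:
  fixes a b :: "real \<Rightarrow> real" and u :: "real \<Rightarrow> real \<Rightarrow> real"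
    and xs :: "nat \<Rightarrow> real" and r :: nat and v :: "real \<Rightarrow> real"
  assumes ta: "trig_poly a" and tb: "trig_poly b"
    and b_simple: "\<forall>t. b t = 0 \<longrightarrow> simple_zero b t"
    and u_sol: "\<forall>x. is_solution a b (\<lambda>t. u t x) \<and> u 0 x = x"
    and r_pos: "1 \<le> r"
    and xs_mono: "\<forall>i\<in>{1..<r}. xs i < xs (Suc i)"
    and gaps_simple: "\<forall>i\<le>r. \<forall>x\<in>gap xs r i. \<forall>t\<in>{0..2*pi}.
        u t x = 0 \<longrightarrow> simple_zero (\<lambda>s. u s x) t"
    and gaps_const: "\<forall>i\<le>r. \<exists>N. \<forall>x\<in>gap xs r i.
        card {t\<in>{0..2*pi}. u t x = 0} = N"
    and v_sol: "is_solution a b v" and v_per: "v 0 = v (2*pi)"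
    and v0: "v 0 \<notin> xs ` {1..r}"
  shows "finite {t\<in>{0..<2*pi}. v t = 0} \<and> even (card {t\<in>{0..<2*pi}. v t = 0})
       \<and> (\<forall>t. v t = 0 \<longrightarrow> simple_zero v t)
       \<and> (xs r < v 0 \<longrightarrow> (\<forall>t. v t > 0))
       \<and> (v 0 < xs 1 \<longrightarrow> (\<forall>t. v t < 0))
       \<and> (xs ` {1..r} = {x. \<exists>t\<in>{0..2*pi}. u t x = 0 \<and> \<not> simple_zero (\<lambda>s. u s x) t}
            \<longrightarrow> xs 1 < v 0 \<longrightarrow> v 0 < xs r \<longrightarrow> (\<exists>t. v t > 0) \<and> (\<exists>t. v t < 0))"
proof -
  obtain A where "A > 0" and A: "\<And>t. \<bar>a t\<bar> \<le> A" using trig_poly_bounded[OF ta] by blast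
  obtain B where B: "\<And>t. \<bar>b t\<bar> \<le> B" using trig_poly_bounded[OF tb] by blast
  have a_per: "\<And>t. a (t + 2*pi) = a t" and b_per: "\<And>t. b (t + 2*pi) = b t"
    using trig_poly_periodic[OF ta] trig_poly_periodic[OF tb] by auto
  have "2*pi > 0" by simp
  have sol: "\<And>x. is_solution a b (\<lambda>t. u t x)" and init: "\<And>x. u 0 x = x" using u_sol by auto
  have v_periodic: "\<And>t. v (t + 2*pi) = v t"
    using is_solution_periodic[OF v_sol A a_per b_per] v_per by simp
  have gap_finite: "finite {t \<in> {0..2*pi}. u t x = 0}" if "i \<le> r" "x \<in> gap xs r i" for i x
    by (rule finite_simple_zeros[OF is_solution_DERIV[OF sol]])
      (use gaps_simple that is_solution_simple_zero_iff[OF sol] in auto)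
  define x0 where "x0 = v 0"
  have v_eq: "v = (\<lambda>t. u t x0)"
  proof
    show "v t = u t x0" for t
      by (rule is_solution_unique[OF v_sol sol A, where s = 0]) (simp add: init x0_def)
  qed
  obtain i where "i \<le> r" "x0 \<in> gap xs r i" using in_some_gap[OF r_pos v0] unfolding x0_def .
  then have "simple_zero v t" if "t \<in> {0..2*pi}" "v t = 0" for t
    using gaps_simple that unfolding v_eq by blast
  note zeros = periodic_solution_zeros[OF v_sol \<open>2*pi > 0\<close> v_periodic b_per this]
  have gap_above: "gap xs r r = {x. xs r < x}" and gap_below: "gap xs r 0 = {x. x < xs 1}"
    using r_pos unfolding gap_def by auto
  have above: "v t > 0" if "xs r < v 0" for t
  proof -
    obtain N where "\<forall>x\<in>gap xs r r. card {t \<in> {0..2*pi}. u t x = 0} = N" using gaps_const by blast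
    then show ?thesis
      using periodic_solution_pos_above[OF sol init A B \<open>A > 0\<close> _ _ v_sol v_periodic \<open>2*pi > 0\<close> that]
        gap_finite[of r] gap_above by simp
  qed
  have below: "v t < 0" if "v 0 < xs 1" for t
  proof -
    obtain N where "\<forall>x\<in>gap xs r 0. card {t \<in> {0..2*pi}. u t x = 0} = N" using gaps_const by blast
    then show ?thesis
      using periodic_solution_neg_below[OF sol init A B \<open>A > 0\<close> _ _ v_sol v_periodic \<open>2*pi > 0\<close> that]
        gap_finite[of 0] gap_below by simp
  qed
  have mixed: "(\<exists>t. v t > 0) \<and> (\<exists>t. v t < 0)"
    if H: "xs ` {1..r} = {x. \<exists>t\<in>{0..2*pi}. u t x = 0 \<and> \<not> simple_zero (\<lambda>s. u s x) t}"
      and "xs 1 < v 0" "v 0 < xs r"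
  proof -
    have "xs 1 \<in> xs ` {1..r}" "xs r \<in> xs ` {1..r}" using r_pos by auto
    then obtain t1 t2 where "u t1 (xs 1) = 0" "u t2 (xs r) = 0" using H by blast
    then show ?thesis using is_solution_changes_sign[OF sol init A v_sol] that(2,3) by blast
  qed
  show ?thesis using zeros above below mixed by blast
qed

end
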